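(* Let $G=(V,E)$ be an unweighted graph with $n$ vertices and let $k\geq 2$ be an integer. Run the clustering defined in the context with $r=k-1$ and $p=1-n^{-1/k}$. Then there exists a set of edges $F\subseteq E$, determined by the sampled values, such that for every outcome and every edge $(x,y)\in E$, one of its endpoints has an edge from $F$ into the cluster of the other endpoint (i.e., either $(x,y')\in F$ for some $y'$ with $c_{y'}=c_y$, or $(x',y)\in F$ for some $x'$ with $c_{x'}=c_x$), and $\mathbb{E}[|F|]=O(n^{1+1/k})$.
   Context: Setting (the clustering): $G=(V,E)$ is a graph (here unweighted, i.e., all edge weights $1$) with shortest-path distance $d_G$, and each vertex has a distinct identifier $\mathrm{ID}(v)$. Let $p\in(0,1)$ and $r\in\mathbb{N}$. Let $\mathrm{GeomCap}(p,r)$ be the distribution on $\{0,\dots,r\}$ with $\Pr[=i]=p(1-p)^i$ for $0\leq i\leq r-1$ and $\Pr[=r]=(1-p)^r$. Each vertex $v$ independently samples $\delta_v\sim\mathrm{GeomCap}(p,r)$. For $u,x\in V$ define $d^{(u)}(s,x):=r-\delta_u+d_G(u,x)$ and the level $d_{G'}(s,x):=\min_{u\in V} d^{(u)}(s,x)$. The cluster center $c_x$ of $x$ is the vertex $u$ with smallest $\mathrm{ID}$ among those with $d^{(u)}(s,x)=d_{G'}(s,x)$; the cluster of a center $c$ is $\{x\in V: c_x=c\}$. *)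

theory Defs
  imports "HOL-Probability.Probability"
begin

definition geomcap :: "real \<Rightarrow> nat \<Rightarrow> nat pmf" where
  "geomcap p r = embed_pmf (\<lambda>i. if i < r then p * (1 - p) ^ i
                                 else if i = r then (1 - p) ^ r else 0)"

definition dG :: "(nat \<times> nat) set \<Rightarrow> nat \<Rightarrow> nat \<Rightarrow> enat" where
  "dG E u x = (if \<exists>m. (u, x) \<in> E ^^ m then enat (LEAST m. (u, x) \<in> E ^^ m) else \<infinity>)"

definition dshift :: "(nat \<times> nat) set \<Rightarrow> nat \<Rightarrow> (nat \<Rightarrow> nat) \<Rightarrow> nat \<Rightarrow> nat \<Rightarrow> enat" where
  "dshift E r \<delta> u x = enat (r - \<delta> u) + dG E u x"

definition level :: "nat set \<Rightarrow> (nat \<times> nat) set \<Rightarrow> nat \<Rightarrow> (nat \<Rightarrow> nat) \<Rightarrow> nat \<Rightarrow> enat" where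
  "level V E r \<delta> x = Min ((\<lambda>u. dshift E r \<delta> u x) ` V)"

definition center :: "nat set \<Rightarrow> (nat \<times> nat) set \<Rightarrow> (nat \<Rightarrow> nat) \<Rightarrow> nat \<Rightarrow> (nat \<Rightarrow> nat) \<Rightarrow> nat \<Rightarrow> nat" where
  "center V E ID r \<delta> x =
     (THE c. c \<in> V \<and> dshift E r \<delta> c x = level V E r \<delta> x \<and>
        (\<forall>u \<in> V. dshift E r \<delta> u x = level V E r \<delta> x \<longrightarrow> ID c \<le> ID u))"

end

theory Submission
  imports Defs
begin

text \<open>
  Write \<open>q = 1 - p = n powr (-1/k)\<close>. Call \<open>u\<close> a near center of \<open>x\<close> if its shifted distance
  to \<open>x\<close> equals the level of \<open>x\<close>, or exceeds it by one while \<open>u\<close> has a smaller ID than the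
  center of \<open>x\<close>. Every vertex keeps one edge into each neighbouring cluster whose center is near
  it. Along an edge \<open>(x, y)\<close> the levels differ by at most one, so the center of \<open>y\<close> is near \<open>x\<close>
  or the center of \<open>x\<close> is near \<open>y\<close>; this is the covering property.
  For the expectation, raising \<open>\<delta> u\<close> by one turns a near center \<open>u\<close> of \<open>x\<close> into the center of
  \<open>x\<close>, and \<open>Pr[\<delta> u = j] \<le> Pr[\<delta> u = j + 1] / q\<close> for \<open>j < r\<close>. Conditioning on the other
  coordinates, \<open>Pr[u near x] \<le> Pr[\<delta> u = r] + Pr[c x = u] / q = q ^ r + Pr[c x = u] / q\<close>, so \<open>x\<close> has at most \<open>n q ^ (k - 1) + 1 / q = 2 n powr (1/k)\<close>
  near centers in expectation, and at most \<open>4 n powr (1 + 1/k)\<close> edges are kept.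
\<close>

lemma dG_refl: "dG E x x = 0"
proof -
  have "(x, x) \<in> E ^^ 0" by simp
  then show ?thesis unfolding dG_def by (metis Least_eq_0 zero_enat_def)
qed

lemma dG_edge_le: assumes "(y, x) \<in> E" shows "dG E u x \<le> dG E u y + 1"
proof (cases "\<exists>m. (u, y) \<in> E ^^ m")
  case True
  define m where "m = (LEAST m. (u, y) \<in> E ^^ m)"
  have "(u, y) \<in> E ^^ m" unfolding m_def using True by (rule LeastI_ex)
  then have ux: "(u, x) \<in> E ^^ Suc m" using assms by auto
  then have "dG E u x = enat (LEAST m. (u, x) \<in> E ^^ m)" unfolding dG_def by (simp add: exI[of _ "Suc m"])
  also have "\<dots> \<le> enat (Suc m)" using Least_le[of "\<lambda>m. (u, x) \<in> E ^^ m", OF ux] by simp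
  also have "\<dots> = dG E u y + 1" using True by (simp add: dG_def m_def one_enat_def)
  finally show ?thesis .
qed (simp add: dG_def)

lemma dshift_refl: "dshift E r \<delta> x x = enat (r - \<delta> x)"
  by (simp add: dshift_def dG_refl)

lemma dshift_edge_le: "(y, x) \<in> E \<Longrightarrow> dshift E r \<delta> u x \<le> dshift E r \<delta> u y + 1"
  unfolding dshift_def by (metis add.assoc add_left_mono dG_edge_le)

lemma dshift_fun_upd_other: "w \<noteq> u \<Longrightarrow> dshift E r (\<delta>(u := j)) w x = dshift E r \<delta> w x"
  by (simp add: dshift_def)

lemma dshift_fun_upd_Suc:
  "\<delta> u < r \<Longrightarrow> dshift E r \<delta> u x = dshift E r (\<delta>(u := Suc (\<delta> u))) u x + 1"
  by (simp add: dshift_def one_enat_def Suc_diff_Suc ac_simps)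

lemma level_le: "finite V \<Longrightarrow> w \<in> V \<Longrightarrow> level V E r \<delta> x \<le> dshift E r \<delta> w x"
  unfolding level_def by (rule Min_le) auto

lemma level_attained: "finite V \<Longrightarrow> V \<noteq> {} \<Longrightarrow> \<exists>w\<in>V. level V E r \<delta> x = dshift E r \<delta> w x"
proof -
  assume "finite V" "V \<noteq> {}"
  then have "Min ((\<lambda>u. dshift E r \<delta> u x) ` V) \<in> (\<lambda>u. dshift E r \<delta> u x) ` V"
    by (intro Min_in) auto
  then show ?thesis unfolding level_def by auto
qed

lemma level_finite: "finite V \<Longrightarrow> x \<in> V \<Longrightarrow> level V E r \<delta> x \<noteq> \<infinity>"
  using level_le[of V x E r \<delta> x] by (metis dshift_refl enat_ord_simps(5) infinity_ileE)

lemma center_eqI: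
  assumes "finite V" "inj_on ID V" "c \<in> V"
    and "\<And>w. w \<in> V \<Longrightarrow> dshift E r \<delta> c x \<le> dshift E r \<delta> w x"
    and "\<And>w. w \<in> V \<Longrightarrow> dshift E r \<delta> w x = dshift E r \<delta> c x \<Longrightarrow> ID c \<le> ID w"
  shows "center V E ID r \<delta> x = c"
proof -
  have level: "level V E r \<delta> x = dshift E r \<delta> c x"
    unfolding level_def using assms by (intro Min_eqI) auto
  show ?thesis
    unfolding center_def level
  proof (rule the_equality)
    fix c' assume c': "c' \<in> V \<and> dshift E r \<delta> c' x = dshift E r \<delta> c x \<and>
      (\<forall>u\<in>V. dshift E r \<delta> u x = dshift E r \<delta> c x \<longrightarrow> ID c' \<le> ID u)"
    then have "ID c' = ID c" using assms by (metis order_antisym)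
    then show "c' = c" using assms c' by (meson inj_onD)
  qed (use assms in auto)
qed

lemma center_spec:
  assumes "finite V" "V \<noteq> {}" "inj_on ID V"
  shows "center V E ID r \<delta> x \<in> V"
    and "dshift E r \<delta> (center V E ID r \<delta> x) x = level V E r \<delta> x"
    and "\<And>u. u \<in> V \<Longrightarrow> dshift E r \<delta> u x = level V E r \<delta> x \<Longrightarrow> ID (center V E ID r \<delta> x) \<le> ID u"
proof -
  define M where "M = {w \<in> V. dshift E r \<delta> w x = level V E r \<delta> x}"
  have "finite M" using assms(1) by (simp add: M_def)
  moreover have "M \<noteq> {}" using level_attained[OF assms(1,2), of E r \<delta> x] by (force simp: M_def)
  ultimately have "Min (ID ` M) \<in> ID ` M" by (intro Min_in) auto
  then obtain c where c: "c \<in> M" "ID c = Min (ID ` M)" by auto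
  have c_spec: "c \<in> V" "dshift E r \<delta> c x = level V E r \<delta> x"
    "\<And>u. u \<in> V \<Longrightarrow> dshift E r \<delta> u x = level V E r \<delta> x \<Longrightarrow> ID c \<le> ID u"
    using c \<open>finite M\<close> by (auto simp: M_def)
  have "center V E ID r \<delta> x = c"
    using c_spec level_le[OF assms(1)] by (intro center_eqI[OF assms(1,3)]) auto
  then show "center V E ID r \<delta> x \<in> V"
    and "dshift E r \<delta> (center V E ID r \<delta> x) x = level V E r \<delta> x"
    and "\<And>u. u \<in> V \<Longrightarrow> dshift E r \<delta> u x = level V E r \<delta> x \<Longrightarrow> ID (center V E ID r \<delta> x) \<le> ID u"
    using c_spec by auto
qed

definition near_centers ::
    "nat set \<Rightarrow> (nat \<times> nat) set \<Rightarrow> (nat \<Rightarrow> nat) \<Rightarrow> nat \<Rightarrow> (nat \<Rightarrow> nat) \<Rightarrow> nat \<Rightarrow> nat set" where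
  "near_centers V E ID r \<delta> x = {u \<in> V. dshift E r \<delta> u x = level V E r \<delta> x \<or>
      (dshift E r \<delta> u x = level V E r \<delta> x + 1 \<and> ID u < ID (center V E ID r \<delta> x))}"

lemma near_centers_subset: "near_centers V E ID r \<delta> x \<subseteq> V"
  by (auto simp: near_centers_def)

lemma center_fun_upd_Suc_near_center:
  assumes fin: "finite V" and inj: "inj_on ID V" and x: "x \<in> V"
    and u: "u \<in> near_centers V E ID r \<delta> x" and lt: "\<delta> u < r"
  shows "center V E ID r (\<delta>(u := Suc (\<delta> u))) x = u"
proof -
  let ?D = "\<lambda>w. dshift E r \<delta> w x" and ?D' = "\<lambda>w. dshift E r (\<delta>(u := Suc (\<delta> u))) w x"
  let ?L = "level V E r \<delta> x"
  have uV: "u \<in> V" using u by (simp add: near_centers_def)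
  obtain l where l: "?L = enat l" using level_finite[OF fin x, of E r \<delta>] by auto
  have Du: "?D u = ?D' u + 1" using lt by (rule dshift_fun_upd_Suc)
  have Dw: "?D' w = ?D w" if "w \<noteq> u" for w using dshift_fun_upd_other[OF that] .
  have L_le: "?L \<le> ?D w" if "w \<in> V" for w using level_le[OF fin that] .
  from u consider (at_level) "?D u = ?L"
    | (above) "?D u = ?L + 1" "ID u < ID (center V E ID r \<delta> x)"
    by (auto simp: near_centers_def)
  then show ?thesis
  proof cases
    case at_level
    then have "?D' u + 1 = enat l" using Du l by simp
    then have D'u: "?D' u = enat (l - 1)" "0 < l"
      by (cases "?D' u"; simp add: one_enat_def)+
    have less: "?D' u < ?D' w" if "w \<in> V" "w \<noteq> u" for w
      using L_le[OF that(1)] Dw[OF that(2)] D'u l by (cases "?D w") auto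
    show ?thesis
      using less by (intro center_eqI[OF fin inj uV]) (auto intro: less_imp_le dest: less)
  next
    case above
    then have D'u: "?D' u = ?L" using Du l by (cases "?D' u") (auto simp: one_enat_def)
    show ?thesis
    proof (rule center_eqI[OF fin inj uV])
      fix w assume "w \<in> V"
      then show "?D' u \<le> ?D' w" using D'u L_le Dw by (cases "w = u") auto
    next
      fix w assume w: "w \<in> V" "?D' w = ?D' u"
      show "ID u \<le> ID w"
      proof (cases "w = u")
        case False
        then have "?D w = ?L" using w D'u Dw by simp
        then show ?thesis using center_spec(3)[OF fin _ inj w(1)] w(1) above(2) by fastforce
      qed simp
    qed
  qed
qed

lemma center_near_across_edge:
  assumes fin: "finite V" and inj: "inj_on ID V" and x: "x \<in> V" and y: "y \<in> V"
    and xy: "(x, y) \<in> E" and yx: "(y, x) \<in> E"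
  shows "center V E ID r \<delta> y \<in> near_centers V E ID r \<delta> x \<or>
         center V E ID r \<delta> x \<in> near_centers V E ID r \<delta> y"
proof -
  define a where "a = center V E ID r \<delta> x"
  define b where "b = center V E ID r \<delta> y"
  have V: "V \<noteq> {}" using x by auto
  note a = center_spec[OF fin V inj, where E=E and r=r and \<delta>=\<delta> and x=x, folded a_def]
  note b = center_spec[OF fin V inj, where E=E and r=r and \<delta>=\<delta> and x=y, folded b_def]
  obtain lx ly where lx: "level V E r \<delta> x = enat lx" and ly: "level V E r \<delta> y = enat ly"
    using level_finite[OF fin x, of E r \<delta>] level_finite[OF fin y, of E r \<delta>] by auto
  have bx: "enat lx \<le> dshift E r \<delta> b x" "dshift E r \<delta> b x \<le> enat (Suc ly)"
    using level_le[OF fin b(1), of E r \<delta> x] dshift_edge_le[OF yx, of r \<delta> b] b(2) lx ly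
    by (simp_all add: eSuc_enat[symmetric] plus_1_eSuc)
  have ay: "enat ly \<le> dshift E r \<delta> a y" "dshift E r \<delta> a y \<le> enat (Suc lx)"
    using level_le[OF fin a(1), of E r \<delta> y] dshift_edge_le[OF xy, of r \<delta> a] a(2) lx ly
    by (simp_all add: eSuc_enat[symmetric] plus_1_eSuc)
  show ?thesis
  proof (cases "dshift E r \<delta> b x = enat lx \<or> dshift E r \<delta> a y = enat ly")
    case True
    then show ?thesis using a(1) b(1) lx ly by (auto simp: near_centers_def a_def b_def)
  next
    case False
    then have "lx = ly" and bx': "dshift E r \<delta> b x = enat (Suc lx)"
      and ay': "dshift E r \<delta> a y = enat (Suc ly)"
      using bx ay by (cases "dshift E r \<delta> b x"; cases "dshift E r \<delta> a y"; simp)+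
    then have "a \<noteq> b" using a(2) lx by auto
    then have "ID b < ID a \<or> ID a < ID b" using inj a(1) b(1) by (metis inj_onD linorder_neqE_nat)
    then show ?thesis
      using a(1) b(1) bx' ay' lx ly \<open>lx = ly\<close>
      by (auto simp: near_centers_def a_def b_def eSuc_enat[symmetric] plus_1_eSuc)
  qed
qed

definition cluster_neighbour ::
    "nat set \<Rightarrow> (nat \<times> nat) set \<Rightarrow> (nat \<Rightarrow> nat) \<Rightarrow> nat \<Rightarrow> (nat \<Rightarrow> nat) \<Rightarrow> nat \<Rightarrow> nat \<Rightarrow> nat" where
  "cluster_neighbour V E ID r \<delta> x c = (SOME y. (x, y) \<in> E \<and> center V E ID r \<delta> y = c)"

definition charged_pairs ::
    "nat set \<Rightarrow> (nat \<times> nat) set \<Rightarrow> (nat \<Rightarrow> nat) \<Rightarrow> nat \<Rightarrow> (nat \<Rightarrow> nat) \<Rightarrow> (nat \<times> nat) set" where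
  "charged_pairs V E ID r \<delta> = {(x, c). x \<in> V \<and> c \<in> near_centers V E ID r \<delta> x \<and>
      (\<exists>y. (x, y) \<in> E \<and> center V E ID r \<delta> y = c)}"

text \<open>Both orientations are kept: the covering property may ask for an edge \<open>(x', y)\<close> ending in
  \<open>y\<close>, whereas the edges charged to \<open>y\<close> start in \<open>y\<close>.\<close>
definition spanner_edges ::
    "nat set \<Rightarrow> (nat \<times> nat) set \<Rightarrow> (nat \<Rightarrow> nat) \<Rightarrow> nat \<Rightarrow> (nat \<Rightarrow> nat) \<Rightarrow> (nat \<times> nat) set" where
  "spanner_edges V E ID r \<delta> =
     (let F = (\<lambda>(x, c). (x, cluster_neighbour V E ID r \<delta> x c)) ` charged_pairs V E ID r \<delta> in F \<union> F\<inverse>)"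

lemma cluster_neighbour_spec:
  "(x, y) \<in> E \<Longrightarrow> center V E ID r \<delta> y = c \<Longrightarrow>
   (x, cluster_neighbour V E ID r \<delta> x c) \<in> E \<and> center V E ID r \<delta> (cluster_neighbour V E ID r \<delta> x c) = c"
  unfolding cluster_neighbour_def by (rule someI) blast

lemma spanner_edges_subset: "sym E \<Longrightarrow> spanner_edges V E ID r \<delta> \<subseteq> E"
  using cluster_neighbour_spec
  by (fastforce simp: spanner_edges_def charged_pairs_def dest: symD)

lemma spanner_edges_cover:
  assumes fin: "finite V" and EV: "E \<subseteq> V \<times> V" and sym: "sym E" and inj: "inj_on ID V"
    and xy: "(x, y) \<in> E"
  shows "(\<exists>y'. (x, y') \<in> spanner_edges V E ID r \<delta> \<and> center V E ID r \<delta> y' = center V E ID r \<delta> y) \<or>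
         (\<exists>x'. (x', y) \<in> spanner_edges V E ID r \<delta> \<and> center V E ID r \<delta> x' = center V E ID r \<delta> x)"
proof -
  have yx: "(y, x) \<in> E" using sym xy by (rule symD)
  have V: "x \<in> V" "y \<in> V" using xy EV by auto
  have charged: "(v, cluster_neighbour V E ID r \<delta> v (center V E ID r \<delta> w)) \<in> spanner_edges V E ID r \<delta>
      \<and> (cluster_neighbour V E ID r \<delta> v (center V E ID r \<delta> w), v) \<in> spanner_edges V E ID r \<delta>"
    if "v \<in> V" "(v, w) \<in> E" "center V E ID r \<delta> w \<in> near_centers V E ID r \<delta> v" for v w
  proof -
    have "(v, center V E ID r \<delta> w) \<in> charged_pairs V E ID r \<delta>"
      using that by (auto simp: charged_pairs_def)
    then show ?thesis unfolding spanner_edges_def Let_def by (auto intro: rev_image_eqI)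
  qed
  show ?thesis
    using center_near_across_edge[OF fin inj V xy yx, of r \<delta>]
      charged[OF V(1) xy] charged[OF V(2) yx] cluster_neighbour_spec[OF xy] cluster_neighbour_spec[OF yx]
    by blast
qed

lemma card_spanner_edges_le:
  assumes "finite V"
  shows "card (spanner_edges V E ID r \<delta>) \<le> 2 * (\<Sum>x\<in>V. card (near_centers V E ID r \<delta> x))"
proof -
  let ?C = "charged_pairs V E ID r \<delta>"
  let ?F = "(\<lambda>(x, c). (x, cluster_neighbour V E ID r \<delta> x c)) ` ?C"
  have sub: "?C \<subseteq> Sigma V (near_centers V E ID r \<delta>)" by (auto simp: charged_pairs_def)
  have fin: "finite (Sigma V (near_centers V E ID r \<delta>))"
    using assms finite_subset[OF near_centers_subset assms] by auto
  have "card (spanner_edges V E ID r \<delta>) \<le> card ?F + card (?F\<inverse>)"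
    unfolding spanner_edges_def Let_def by (rule card_Un_le)
  also have "\<dots> \<le> 2 * card ?C"
    using card_image_le[OF finite_subset[OF sub fin], of "\<lambda>(x, c). (x, cluster_neighbour V E ID r \<delta> x c)"]
    by simp
  also have "card ?C \<le> card (Sigma V (near_centers V E ID r \<delta>))" by (rule card_mono[OF fin sub])
  also have "\<dots> = (\<Sum>x\<in>V. card (near_centers V E ID r \<delta> x))"
    using assms finite_subset[OF near_centers_subset assms] by (simp add: card_SigmaI)
  finally show ?thesis by simp
qed

lemma pmf_geomcap:
  assumes "0 \<le> p" "p \<le> 1"
  shows "pmf (geomcap p r) i = (if i < r then p * (1 - p) ^ i else if i = r then (1 - p) ^ r else 0)"
proof -
  define w where "w i = (if i < r then p * (1 - p) ^ i else if i = r then (1 - p) ^ r else 0)" for i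
  have w_nonneg: "0 \<le> w i" for i using assms by (simp add: w_def)
  have "(\<Sum>i<r. w i) = p * (\<Sum>i<r. (1 - p) ^ i)"
    by (simp add: w_def sum_distrib_left)
  also have "\<dots> = 1 - (1 - p) ^ r" using one_diff_power_eq[of "1 - p" r] by simp
  finally have "(\<Sum>i\<le>r. w i) = 1" by (simp add: lessThan_Suc_atMost[symmetric] w_def)
  then have "(\<Sum>i\<le>r. ennreal (w i)) = 1" by (simp add: sum_ennreal w_nonneg)
  then have "(\<integral>\<^sup>+i. ennreal (w i) \<partial>count_space UNIV) = 1"
    by (subst nn_integral_count_space'[of "{..r}"]) (auto simp: w_def)
  then have "pmf (embed_pmf w) i = w i" using w_nonneg by (intro pmf_embed_pmf)
  then show ?thesis by (simp add: geomcap_def w_def[abs_def])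
qed

lemma set_pmf_geomcap_subset: "0 \<le> p \<Longrightarrow> p \<le> 1 \<Longrightarrow> set_pmf (geomcap p r) \<subseteq> {..r}"
  by (auto simp: set_pmf_eq pmf_geomcap split: if_splits)

lemma finite_set_pmf_geomcap: "0 \<le> p \<Longrightarrow> p \<le> 1 \<Longrightarrow> finite (set_pmf (geomcap p r))"
  using set_pmf_geomcap_subset finite_subset by blast

lemma integrable_Pi_pmf_geomcap:
  fixes f :: "('a \<Rightarrow> nat) \<Rightarrow> real"
  shows "finite V \<Longrightarrow> 0 \<le> p \<Longrightarrow> p \<le> 1 \<Longrightarrow> integrable (measure_pmf (Pi_pmf V d (\<lambda>_. geomcap p r))) f"
  by (intro integrable_measure_pmf_finite) (auto simp: set_Pi_pmf finite_set_pmf_geomcap)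

lemma pmf_geomcap_le_Suc:
  assumes "0 < q" "q \<le> 1" "j < r"
  shows "pmf (geomcap (1 - q) r) j \<le> pmf (geomcap (1 - q) r) (Suc j) / q"
proof -
  have "(1 - q) * q ^ j \<le> q ^ j" using assms by (simp add: mult_left_le_one_le)
  then show ?thesis
    using assms by (cases "Suc j = r") (auto simp: pmf_geomcap field_simps)
qed

lemma expectation_geomcap_le_shift:
  fixes f g :: "nat \<Rightarrow> real"
  assumes q: "0 < q" "q \<le> 1"
    and f: "\<And>j. 0 \<le> f j" "\<And>j. f j \<le> 1" and g: "\<And>j. 0 \<le> g j"
    and shift: "\<And>j. j < r \<Longrightarrow> f j \<le> g (Suc j)"
  shows "measure_pmf.expectation (geomcap (1 - q) r) f
           \<le> q ^ r + measure_pmf.expectation (geomcap (1 - q) r) g / q"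
proof -
  let ?w = "pmf (geomcap (1 - q) r)"
  have expectation: "measure_pmf.expectation (geomcap (1 - q) r) h = (\<Sum>j\<le>r. h j * ?w j)" for h
    using set_pmf_geomcap_subset[of "1 - q" r] q by (intro integral_measure_pmf_real) auto
  have "(\<Sum>j<r. f j * ?w j) \<le> (\<Sum>j<r. g (Suc j) * ?w (Suc j)) / q"
    unfolding sum_divide_distrib
  proof (intro sum_mono)
    fix j assume "j \<in> {..<r}"
    then have "f j * ?w j \<le> g (Suc j) * (?w (Suc j) / q)"
      using pmf_geomcap_le_Suc[OF q] by (intro mult_mono shift f g) auto
    then show "f j * ?w j \<le> g (Suc j) * ?w (Suc j) / q" by simp
  qed
  also have "\<dots> \<le> (\<Sum>j\<le>r. g j * ?w j) / q"
    unfolding atMost_Suc_eq_insert_0 lessThan_Suc_atMost[symmetric] sum.lessThan_Suc_shift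
    using q g by (intro divide_right_mono) auto
  finally have "(\<Sum>j\<le>r. f j * ?w j) \<le> f r * ?w r + (\<Sum>j\<le>r. g j * ?w j) / q"
    by (simp add: lessThan_Suc_atMost[symmetric])
  moreover have "f r * ?w r \<le> q ^ r"
    using q f(2)[of r] by (simp add: pmf_geomcap mult_left_le_one_le)
  ultimately show ?thesis unfolding expectation by simp
qed

lemma expectation_Pi_pmf_resample:
  fixes h :: "('a \<Rightarrow> 'b) \<Rightarrow> real"
  assumes "finite V" "u \<in> V" "finite (set_pmf G)"
  shows "measure_pmf.expectation (Pi_pmf V d (\<lambda>_. G)) h =
    measure_pmf.expectation (Pi_pmf (V - {u}) d (\<lambda>_. G))
      (\<lambda>\<delta>. measure_pmf.expectation G (\<lambda>j. h (\<delta>(u := j))))"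
proof -
  let ?Q = "Pi_pmf (V - {u}) d (\<lambda>_. G)"
  have V: "V = insert u (V - {u})" using assms by auto
  have "Pi_pmf V d (\<lambda>_. G) = do {j \<leftarrow> G; \<delta> \<leftarrow> ?Q; return_pmf (\<delta>(u := j))}"
    using assms by (subst V, intro Pi_pmf_insert') auto
  also have "\<dots> = do {\<delta> \<leftarrow> ?Q; map_pmf (\<lambda>j. \<delta>(u := j)) G}"
    by (subst bind_commute_pmf) (simp add: map_pmf_def)
  finally have decomp: "Pi_pmf V d (\<lambda>_. G) = do {\<delta> \<leftarrow> ?Q; map_pmf (\<lambda>j. \<delta>(u := j)) G}" .
  have fin_Q: "finite (set_pmf ?Q)" using assms by (auto simp: set_Pi_pmf)
  show ?thesis
    unfolding decomp using assms fin_Q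
    by (subst pmf_expectation_bind[OF fin_Q]) (auto simp: integral_measure_pmf_real[OF fin_Q] mult.commute)
qed

lemma expectation_Pi_geomcap_le_shift:
  fixes h g :: "('a \<Rightarrow> nat) \<Rightarrow> real"
  assumes fin: "finite V" and u: "u \<in> V" and q: "0 < q" "q \<le> 1"
    and h: "\<And>\<delta>. 0 \<le> h \<delta>" "\<And>\<delta>. h \<delta> \<le> 1" and g: "\<And>\<delta>. 0 \<le> g \<delta>"
    and shift: "\<And>\<delta> j. j < r \<Longrightarrow> h (\<delta>(u := j)) \<le> g (\<delta>(u := Suc j))"
  shows "measure_pmf.expectation (Pi_pmf V d (\<lambda>_. geomcap (1 - q) r)) h
           \<le> q ^ r + measure_pmf.expectation (Pi_pmf V d (\<lambda>_. geomcap (1 - q) r)) g / q"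
proof -
  let ?G = "geomcap (1 - q) r"
  let ?Q = "Pi_pmf (V - {u}) d (\<lambda>_. ?G)"
  have fin_G: "finite (set_pmf ?G)" using q by (simp add: finite_set_pmf_geomcap)
  have int: "integrable (measure_pmf ?Q) f" for f :: "('a \<Rightarrow> nat) \<Rightarrow> real"
    using fin q by (intro integrable_Pi_pmf_geomcap) auto
  have "measure_pmf.expectation ?Q (\<lambda>\<delta>. measure_pmf.expectation ?G (\<lambda>j. h (\<delta>(u := j))))
      \<le> measure_pmf.expectation ?Q (\<lambda>\<delta>. q ^ r + measure_pmf.expectation ?G (\<lambda>j. g (\<delta>(u := j))) / q)"
    using q h g shift by (intro integral_mono int expectation_geomcap_le_shift) auto
  also have "\<dots> = q ^ r + measure_pmf.expectation ?Q (\<lambda>\<delta>. measure_pmf.expectation ?G (\<lambda>j. g (\<delta>(u := j)))) / q"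
    using int by (simp add: integral_add)
  finally show ?thesis
    unfolding expectation_Pi_pmf_resample[OF fin u fin_G] .
qed

lemma expectation_card_near_centers_le:
  assumes fin: "finite V" and inj: "inj_on ID V" and x: "x \<in> V" and q: "0 < q" "q \<le> 1"
  shows "measure_pmf.expectation (Pi_pmf V 0 (\<lambda>_. geomcap (1 - q) r))
           (\<lambda>\<delta>. real (card (near_centers V E ID r \<delta> x)))
         \<le> real (card V) * q ^ r + 1 / q"
proof -
  let ?P = "Pi_pmf V 0 (\<lambda>_. geomcap (1 - q) r)"
  let ?is_near = "\<lambda>\<delta> u. of_bool (u \<in> near_centers V E ID r \<delta> x) :: real"
  let ?is_center = "\<lambda>\<delta> u. of_bool (center V E ID r \<delta> x = u) :: real"
  have int: "integrable (measure_pmf ?P) f" for f :: "(nat \<Rightarrow> nat) \<Rightarrow> real"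
    using fin q by (intro integrable_Pi_pmf_geomcap) auto
  have per_vertex: "measure_pmf.expectation ?P (\<lambda>\<delta>. ?is_near \<delta> u)
      \<le> q ^ r + measure_pmf.expectation ?P (\<lambda>\<delta>. ?is_center \<delta> u) / q" if u: "u \<in> V" for u
  proof (rule expectation_Pi_geomcap_le_shift[OF fin u q])
    fix \<delta> :: "nat \<Rightarrow> nat" and j assume "j < r"
    show "?is_near (\<delta>(u := j)) u \<le> ?is_center (\<delta>(u := Suc j)) u"
      using center_fun_upd_Suc_near_center[OF fin inj x, of u E r "\<delta>(u := j)"] \<open>j < r\<close> by auto
  qed auto
  have "measure_pmf.expectation ?P (\<lambda>\<delta>. real (card (near_centers V E ID r \<delta> x)))
      = measure_pmf.expectation ?P (\<lambda>\<delta>. \<Sum>u\<in>V. ?is_near \<delta> u)"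
    using fin by (simp add: Int_absorb1[OF near_centers_subset])
  also have "\<dots> = (\<Sum>u\<in>V. measure_pmf.expectation ?P (\<lambda>\<delta>. ?is_near \<delta> u))"
    by (rule Bochner_Integration.integral_sum[OF int])
  also have "\<dots> \<le> (\<Sum>u\<in>V. q ^ r + measure_pmf.expectation ?P (\<lambda>\<delta>. ?is_center \<delta> u) / q)"
    by (intro sum_mono per_vertex)
  also have "\<dots> = real (card V) * q ^ r + measure_pmf.expectation ?P (\<lambda>\<delta>. \<Sum>u\<in>V. ?is_center \<delta> u) / q"
    by (simp add: sum.distrib sum_divide_distrib Bochner_Integration.integral_sum[OF int])
  also have "measure_pmf.expectation ?P (\<lambda>\<delta>. \<Sum>u\<in>V. ?is_center \<delta> u) \<le> 1"
  proof -
    have "card (V \<inter> {u. center V E ID r \<delta> x = u}) \<le> 1" for \<delta>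
      using card_mono[of "{center V E ID r \<delta> x}"] by fastforce
    then show ?thesis
      using fin by (intro measure_pmf.integral_le_const int) auto
  qed
  finally show ?thesis using q by (simp add: divide_right_mono)
qed

lemma expectation_card_spanner_edges_le:
  assumes fin: "finite V" and inj: "inj_on ID V" and q: "0 < q" "q \<le> 1"
  shows "measure_pmf.expectation (Pi_pmf V 0 (\<lambda>_. geomcap (1 - q) r))
           (\<lambda>\<delta>. real (card (spanner_edges V E ID r \<delta>)))
         \<le> 2 * real (card V) * (real (card V) * q ^ r + 1 / q)"
proof -
  let ?P = "Pi_pmf V 0 (\<lambda>_. geomcap (1 - q) r)"
  have int: "integrable (measure_pmf ?P) f" for f :: "(nat \<Rightarrow> nat) \<Rightarrow> real"
    using fin q by (intro integrable_Pi_pmf_geomcap) auto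
  have "measure_pmf.expectation ?P (\<lambda>\<delta>. real (card (spanner_edges V E ID r \<delta>)))
      \<le> measure_pmf.expectation ?P (\<lambda>\<delta>. 2 * (\<Sum>x\<in>V. real (card (near_centers V E ID r \<delta> x))))"
  proof (rule integral_mono[OF int int])
    fix \<delta>
    show "real (card (spanner_edges V E ID r \<delta>)) \<le> 2 * (\<Sum>x\<in>V. real (card (near_centers V E ID r \<delta> x)))"
      using card_spanner_edges_le[OF fin, of E ID r \<delta>]
      by (metis of_nat_le_iff of_nat_mult of_nat_numeral of_nat_sum)
  qed
  also have "\<dots> = 2 * (\<Sum>x\<in>V. measure_pmf.expectation ?P (\<lambda>\<delta>. real (card (near_centers V E ID r \<delta> x))))"
    by (simp add: Bochner_Integration.integral_sum[OF int])
  also have "\<dots> \<le> 2 * (\<Sum>x\<in>V. real (card V) * q ^ r + 1 / q)"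
    using expectation_card_near_centers_le[OF fin inj _ q] by (intro mult_left_mono sum_mono) auto
  finally show ?thesis by simp
qed

lemma spanner_bound_at_powr:
  fixes n k :: nat
  assumes n: "1 \<le> n" and k: "2 \<le> k"
  defines "q \<equiv> real n powr (- 1 / real k)"
  shows "0 < q" "q \<le> 1" "2 * real n * (real n * q ^ (k - 1) + 1 / q) = 4 * real n powr (1 + 1 / real k)"
proof -
  have n0: "0 < real n" using n by simp
  show "0 < q" unfolding q_def using n0 by simp
  show "q \<le> 1" unfolding q_def using n k powr_mono[of "- 1 / real k" 0 "real n"] by simp
  have "real n * q ^ (k - 1) = real n powr 1 * real n powr (real (k - 1) * (- 1 / real k))"
    unfolding q_def using n0 by (simp add: powr_power)
  also have "\<dots> = real n powr (1 + real (k - 1) * (- 1 / real k))"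
    by (rule powr_add[symmetric])
  also have "1 + real (k - 1) * (- 1 / real k) = 1 / real k"
    using k by (simp add: of_nat_diff field_simps)
  finally have "real n * q ^ (k - 1) = real n powr (1 / real k)" .
  moreover have "1 / q = real n powr (1 / real k)"
    unfolding q_def using n0 by (simp add: powr_minus_divide[symmetric] powr_minus divide_inverse)
  ultimately show "2 * real n * (real n * q ^ (k - 1) + 1 / q) = 4 * real n powr (1 + 1 / real k)"
    using n0 by (simp add: powr_add)
qed

lemma expectation_card_spanner_edges_powr_le:
  assumes fin: "finite V" and inj: "inj_on ID V" and k: "2 \<le> k"
  shows "measure_pmf.expectation
           (Pi_pmf V 0 (\<lambda>_. geomcap (1 - real (card V) powr (- 1 / real k)) (k - 1)))
           (\<lambda>\<delta>. real (card (spanner_edges V E ID (k - 1) \<delta>)))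
         \<le> 4 * real (card V) powr (1 + 1 / real k)"
proof (cases "V = {}")
  case True
  then show ?thesis using card_spanner_edges_le[OF fin, of E ID "k - 1"] by simp
next
  case False
  then have "1 \<le> card V" using fin by (simp add: Suc_le_eq card_gt_0_iff)
  note bound = spanner_bound_at_powr[OF this k]
  show ?thesis
    using expectation_card_spanner_edges_le[OF fin inj bound(1,2), of "k - 1" E] bound(3) by simp
qed

theorem lemma9:
  "\<exists>C::real. \<forall>(V::nat set) (E::(nat \<times> nat) set) (ID::nat \<Rightarrow> nat) (k::nat).
     finite V \<and> E \<subseteq> V \<times> V \<and> sym E \<and> irrefl E \<and> inj_on ID V \<and> k \<ge> 2 \<longrightarrow>
     (let n = card V; r = k - 1; p = 1 - real n powr (- 1 / real k);
          P = Pi_pmf V 0 (\<lambda>_. geomcap p r) in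
      \<exists>F :: (nat \<Rightarrow> nat) \<Rightarrow> (nat \<times> nat) set.
        (\<forall>\<delta> \<in> set_pmf P. F \<delta> \<subseteq> E \<and>
           (\<forall>(x, y) \<in> E.
              (\<exists>y'. (x, y') \<in> F \<delta> \<and> center V E ID r \<delta> y' = center V E ID r \<delta> y) \<or>
              (\<exists>x'. (x', y) \<in> F \<delta> \<and> center V E ID r \<delta> x' = center V E ID r \<delta> x))) \<and>
        measure_pmf.expectation P (\<lambda>\<delta>. real (card (F \<delta>)))
          \<le> C * real n powr (1 + 1 / real k))"
proof (intro exI[of _ 4] allI impI)
  fix V :: "nat set" and E :: "(nat \<times> nat) set" and ID :: "nat \<Rightarrow> nat" and k :: nat
  assume "finite V \<and> E \<subseteq> V \<times> V \<and> sym E \<and> irrefl E \<and> inj_on ID V \<and> k \<ge> 2"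
  then have fin: "finite V" and EV: "E \<subseteq> V \<times> V" and sym: "sym E" and inj: "inj_on ID V"
    and k: "2 \<le> k" by auto
  show "let n = card V; r = k - 1; p = 1 - real n powr (- 1 / real k);
          P = Pi_pmf V 0 (\<lambda>_. geomcap p r) in
      \<exists>F. (\<forall>\<delta> \<in> set_pmf P. F \<delta> \<subseteq> E \<and>
           (\<forall>(x, y) \<in> E.
              (\<exists>y'. (x, y') \<in> F \<delta> \<and> center V E ID r \<delta> y' = center V E ID r \<delta> y) \<or>
              (\<exists>x'. (x', y) \<in> F \<delta> \<and> center V E ID r \<delta> x' = center V E ID r \<delta> x))) \<and>
        measure_pmf.expectation P (\<lambda>\<delta>. real (card (F \<delta>))) \<le> 4 * real n powr (1 + 1 / real k)"
    unfolding Let_def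
    using spanner_edges_subset[OF sym] spanner_edges_cover[OF fin EV sym inj]
      expectation_card_spanner_edges_powr_le[OF fin inj k, of E]
    by (intro exI[of _ "spanner_edges V E ID (k - 1)"]) blast
qed

end
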